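(* Let $A\in M_n(\mathbb{Z})$ be invertible such that $x\mapsto A^{-1}x$ is a similarity with respect to Euclidean distance, and let $D$ be a subset of a complete residue system mod $A$. Then the set of $\alpha\in T_{A,D-D}$ for which the box-counting dimension of $T_{A,D}\cap(T_{A,D}+\alpha)$ exists and equals $\dim_B T_{A,D}$ is dense in $T_{A,D-D}$.
   Context: A similarity means a map $f$ with $\|f(x)-f(y)\|=c\|x-y\|$ for some $c\in(0,1)$ and all $x,y$. For finite $E\subset\mathbb{R}^n$, $\pi_{A,E}((e_j)_{j\ge1})=\sum_{j\ge1}A^{-j}e_j$ for $(e_j)\in E^{\mathbb{N}}$ and $T_{A,E}=\pi_{A,E}(E^{\mathbb{N}})$. $D-D=\{a-b:a,b\in D\}$. A complete residue system mod $A$ is a set $\mathcal{D}\subset\mathbb{Z}^n$ mapping bijectively onto $\mathbb{Z}^n/A\mathbb{Z}^n$. *)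

theory Defs
  imports "HOL-Analysis.Analysis"
begin

definition real_mat :: "int^'n^'n \<Rightarrow> real^'n^'n" where
  "real_mat A = (\<chi> i j. of_int (A$i$j))"

definition real_vec :: "int^'n \<Rightarrow> real^'n" where
  "real_vec z = (\<chi> i. of_int (z$i))"

definition inv_similarity :: "int^'n^'n \<Rightarrow> bool" where
  "inv_similarity A \<longleftrightarrow> det (real_mat A) \<noteq> 0 \<and>
     (\<exists>c. 0 < c \<and> c < 1 \<and>
        (\<forall>x y. norm (matrix_inv (real_mat A) *v x - matrix_inv (real_mat A) *v y) = c * norm (x - y)))"

definition complete_residue_system :: "int^'n^'n \<Rightarrow> (int^'n) set \<Rightarrow> bool" where
  "complete_residue_system A R \<longleftrightarrow>
     (\<forall>z. \<exists>d\<in>R. \<exists>k. z - d = A *v k) \<and>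
     (\<forall>d1\<in>R. \<forall>d2\<in>R. (\<exists>k. d1 - d2 = A *v k) \<longrightarrow> d1 = d2)"

text \<open>pi_{A,E}((e_j)_{j\<ge>1}) = \<Sum>_{j\<ge>1} A^{-j} e_j ; the sequence is indexed from 0 here,
  e j standing for e_{j+1}.\<close>
definition pi_AE :: "real^'n^'n \<Rightarrow> (nat \<Rightarrow> real^'n) \<Rightarrow> real^'n" where
  "pi_AE A e = (\<Sum>j. ((\<lambda>x. matrix_inv A *v x) ^^ (Suc j)) (e j))"

definition T_AE :: "real^'n^'n \<Rightarrow> (real^'n) set \<Rightarrow> (real^'n) set" where
  "T_AE A E = {pi_AE A e | e. \<forall>j. e j \<in> E}"

definition set_minus_set :: "'a::ab_group_add set \<Rightarrow> 'a set \<Rightarrow> 'a set" where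
  "set_minus_set X Y = {a - b | a b. a \<in> X \<and> b \<in> Y}"

definition cover_number :: "real \<Rightarrow> 'a::metric_space set \<Rightarrow> nat" where
  "cover_number \<delta> F = (LEAST m. \<exists>C. finite C \<and> card C = m \<and> F \<subseteq> \<Union>C \<and> (\<forall>S\<in>C. diameter S \<le> \<delta>))"

definition has_box_dim :: "'a::metric_space set \<Rightarrow> real \<Rightarrow> bool" where
  "has_box_dim F d \<longleftrightarrow>
     ((\<lambda>\<delta>. ln (real (cover_number \<delta> F)) / (- ln \<delta>)) \<longlongrightarrow> d) (at_right 0)"

end

(* Write c for the contraction ratio of A^-1 and T for T_{A,D}. Every alpha in T_{A,D-D} has
   digits a_j - b_j with a_j, b_j in D, and truncating them after m places gives points alpha_m of
   T_{A,D-D} converging to alpha. Each T \<inter> (T + alpha_m) contains the cylinder of T of points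
   whose first m digits are a_0, ..., a_(m-1), so at scale c^k it needs at least about
   |D|^(k-m) covering sets: scaled by A^k, the points with distinct digit strings of length k lie
   near distinct lattice points because D is part of a complete residue system. It needs at most
   |D|^k sets since T is covered by |D|^k copies of itself shrunk by c^k. Both bounds give the
   box dimension log |D| / (- log c), which is also that of T. *)

theory Submission
  imports Defs
begin

lemma exists_power_bracket:
  fixes c \<delta> :: real
  assumes "0 < c" "c < 1" "0 < \<delta>" "\<delta> \<le> 1"
  shows "\<exists>k. c ^ Suc k < \<delta> \<and> \<delta> \<le> c ^ k"
proof -
  obtain n where n: "c ^ n < \<delta>" using real_arch_pow_inv[OF assms(3) assms(2)] by blast
  define j where "j = (LEAST j. c ^ j < \<delta>)"
  have j: "c ^ j < \<delta>" unfolding j_def by (rule LeastI[of _ n]) (rule n)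
  have before_j: "\<And>i. i < j \<Longrightarrow> \<not> c ^ i < \<delta>" unfolding j_def using not_less_Least by blast
  have "j \<noteq> 0"
  proof
    assume "j = 0" with j assms(4) show False by simp
  qed
  then obtain k where "j = Suc k" using not0_implies_Suc by blast
  then show ?thesis using j before_j[of k] by auto
qed

lemma tendsto_div_neg_ln_if_bounded_deviation:
  fixes G :: "real \<Rightarrow> real"
  assumes "eventually (\<lambda>\<delta>. \<bar>G \<delta> - d * (- ln \<delta>)\<bar> \<le> C) (at_right 0)"
  shows "((\<lambda>\<delta>. G \<delta> / (- ln \<delta>)) \<longlongrightarrow> d) (at_right 0)"
proof -
  have small: "eventually (\<lambda>\<delta>::real. 0 < \<delta> \<and> \<delta> < 1) (at_right 0)"
    by (rule eventually_at_right_field[THEN iffD2]) (rule exI[of _ 1], auto)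
  have "filterlim (\<lambda>\<delta>::real. - ln \<delta>) at_top (at_right 0)"
    using ln_at_0 by (simp add: filterlim_uminus_at_top)
  then have "((\<lambda>\<delta>. C / (- ln \<delta>)) \<longlongrightarrow> 0) (at_right (0::real))"
    by (intro tendsto_divide_0[OF tendsto_const] filterlim_at_top_imp_at_infinity)
  moreover have "\<forall>\<^sub>F \<delta> in at_right 0. norm ((G \<delta> - d * - ln \<delta>) / - ln \<delta>) \<le> C / - ln \<delta>"
    using assms small
  proof eventually_elim
    case (elim \<delta>)
    then have pos: "0 < - ln \<delta>" by simp
    have "\<bar>(G \<delta> - d * - ln \<delta>) / - ln \<delta>\<bar> = \<bar>G \<delta> - d * - ln \<delta>\<bar> / - ln \<delta>"
      using pos by (simp add: abs_div_pos)
    also have "\<dots> \<le> C / - ln \<delta>" using elim(1) pos by (intro divide_right_mono) auto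
    finally show ?case by simp
  qed
  ultimately have "((\<lambda>\<delta>. (G \<delta> - d * (- ln \<delta>)) / (- ln \<delta>)) \<longlongrightarrow> 0) (at_right 0)"
    by (rule Lim_null_comparison[rotated])
  then have lim: "((\<lambda>\<delta>. (G \<delta> - d * (- ln \<delta>)) / (- ln \<delta>) + d) \<longlongrightarrow> 0 + d) (at_right 0)"
    by (intro tendsto_add tendsto_const)
  have eq: "eventually (\<lambda>\<delta>. (G \<delta> - d * (- ln \<delta>)) / (- ln \<delta>) + d = G \<delta> / (- ln \<delta>)) (at_right 0)"
    using small
  proof eventually_elim
    case (elim \<delta>)
    then have "- ln \<delta> \<noteq> 0" by simp
    then show ?case by (simp add: field_simps)
  qed
  show ?thesis using lim tendsto_cong[OF eq] by simp
qed

lemma ln_count_deviation_le: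
  fixes a c K N \<delta> :: real and k p :: nat
  assumes c0: "0 < c" and c1: "c < 1" and a1: "1 \<le> a" and K0: "0 < K"
    and N: "a ^ k \<le> K * N" "N \<le> a ^ (p + k)" and \<delta>: "c ^ Suc k < \<delta>" "\<delta> \<le> c ^ k"
  shows "\<bar>ln N - ln a / (- ln c) * (- ln \<delta>)\<bar> \<le> p * ln a + \<bar>ln K\<bar> + ln a"
proof -
  define d where "d = ln a / (- ln c)"
  have lnc: "ln c < 0" using c0 c1 by simp
  have lna: "0 \<le> ln a" using a1 by simp
  have d0: "0 \<le> d" unfolding d_def using lnc lna by (intro divide_nonneg_pos) auto
  have d_scale: "d * (r * (- ln c)) = r * ln a" for r :: real
    unfolding d_def using lnc by (simp add: field_simps)
  have "0 < a ^ k" using a1 by simp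
  then have "0 < K * N" using N(1) by linarith
  then have N0: "0 < N" using K0 by (simp add: zero_less_mult_iff)
  then have "ln (a ^ k) \<le> ln (K * N)" "ln N \<le> ln (a ^ (p + k))" using N \<open>0 < a ^ k\<close> by simp_all
  then have ln_N: "real k * ln a \<le> ln K + ln N" "ln N \<le> real p * ln a + real k * ln a"
    using K0 a1 N0 by (simp_all add: ln_mult ln_realpow algebra_simps)
  have "0 < \<delta>" using \<delta>(1) c0 by (meson less_trans zero_less_power)
  then have "ln (c ^ Suc k) < ln \<delta>" "ln \<delta> \<le> ln (c ^ k)" using \<delta> c0 by simp_all
  then have "real (Suc k) * ln c < ln \<delta>" "ln \<delta> \<le> real k * ln c"
    using c0 by (simp_all add: ln_realpow del: power_Suc)
  then have "d * (real k * (- ln c)) \<le> d * (- ln \<delta>)" "d * (- ln \<delta>) \<le> d * (real (Suc k) * (- ln c))"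
    using d0 by (auto intro!: mult_left_mono)
  then have "real k * ln a \<le> d * (- ln \<delta>)" "d * (- ln \<delta>) \<le> real k * ln a + ln a"
    unfolding d_scale by (simp_all add: algebra_simps)
  then show ?thesis
    unfolding abs_le_iff d_def[symmetric] using ln_N lna abs_ge_self[of "ln K"] abs_ge_minus_self[of "ln K"]
      mult_nonneg_nonneg[OF of_nat_0_le_iff[of p] lna] by linarith
qed

lemma tendsto_ln_div_neg_ln_if_geometric_bounds:
  fixes N :: "real \<Rightarrow> nat" and a c K L :: real and m :: nat
  assumes c0: "0 < c" and c1: "c < 1" and a1: "1 \<le> a" and K0: "0 < K" and L0: "0 < L"
    and antimono: "\<And>\<delta>1 \<delta>2. 0 < \<delta>1 \<Longrightarrow> \<delta>1 \<le> \<delta>2 \<Longrightarrow> N \<delta>2 \<le> N \<delta>1"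
    and lower: "\<And>k. m \<le> k \<Longrightarrow> a ^ k \<le> K * real (N (c ^ k))"
    and upper: "\<And>k. real (N (L * c ^ k)) \<le> a ^ k"
  shows "((\<lambda>\<delta>. ln (real (N \<delta>)) / (- ln \<delta>)) \<longlongrightarrow> ln a / (- ln c)) (at_right 0)"
proof -
  obtain p where p: "c ^ p < c / L" using real_arch_pow_inv[of "c / L" c] c0 c1 L0 by auto
  have "eventually (\<lambda>\<delta>. \<bar>ln (real (N \<delta>)) - ln a / (- ln c) * (- ln \<delta>)\<bar> \<le> p * ln a + \<bar>ln K\<bar> + ln a)
      (at_right 0)"
    unfolding eventually_at_right_field
  proof (rule exI[of _ "c ^ m"], intro conjI allI impI)
    show "(0::real) < c ^ m" using c0 by simp
    fix \<delta> :: real assume \<delta>: "0 < \<delta>" "\<delta> < c ^ m"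
    have "c ^ m \<le> 1" using c0 c1 by (simp add: power_le_one)
    then obtain k where k: "c ^ Suc k < \<delta>" "\<delta> \<le> c ^ k"
      using exists_power_bracket[OF c0 c1 \<delta>(1)] \<delta>(2) by force
    have "m \<le> k"
    proof (rule ccontr)
      assume "\<not> m \<le> k"
      then have "c ^ m \<le> c ^ Suc k" using c0 c1 by (intro power_decreasing) auto
      then show False using k \<delta> by simp
    qed
    have "K * real (N (c ^ k)) \<le> K * real (N \<delta>)" using antimono[OF \<delta>(1) k(2)] K0 by simp
    then have "a ^ k \<le> K * real (N \<delta>)" using lower[OF \<open>m \<le> k\<close>] by linarith
    moreover have "real (N \<delta>) \<le> a ^ (p + k)"
    proof -
      have "L * c ^ (p + k) = (L * c ^ p) * c ^ k" by (simp add: power_add)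
      also have "\<dots> < c * c ^ k"
        using p L0 c0 by (intro mult_strict_right_mono) (simp_all add: pos_less_divide_eq mult.commute)
      finally have "L * c ^ (p + k) < \<delta>" using k by simp
      moreover have "0 < L * c ^ (p + k)" using L0 c0 by simp
      ultimately have "N \<delta> \<le> N (L * c ^ (p + k))" using antimono by simp
      then show ?thesis using upper[of "p + k"] by linarith
    qed
    ultimately show "\<bar>ln (real (N \<delta>)) - ln a / (- ln c) * (- ln \<delta>)\<bar> \<le> p * ln a + \<bar>ln K\<bar> + ln a"
      by (rule ln_count_deviation_le[OF c0 c1 a1 K0 _ _ k])
  qed
  then show ?thesis by (rule tendsto_div_neg_ln_if_bounded_deviation)
qed

definition is_cover :: "real \<Rightarrow> 'a::metric_space set \<Rightarrow> 'a set set \<Rightarrow> bool" where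
  "is_cover \<delta> F C \<longleftrightarrow> finite C \<and> F \<subseteq> \<Union>C \<and> (\<forall>S\<in>C. diameter S \<le> \<delta>)"

lemma is_cover_mono: "\<delta> \<le> \<delta>' \<Longrightarrow> is_cover \<delta> F C \<Longrightarrow> is_cover \<delta>' F C"
  unfolding is_cover_def by force

lemma cover_number_le_card: "is_cover \<delta> F C \<Longrightarrow> cover_number \<delta> F \<le> card C"
  unfolding cover_number_def is_cover_def by (rule Least_le) auto

lemma cover_number_attained:
  assumes "is_cover \<delta> F C0"
  obtains C where "is_cover \<delta> F C" "card C = cover_number \<delta> F"
proof -
  have "\<exists>C. finite C \<and> card C = cover_number \<delta> F \<and> F \<subseteq> \<Union>C \<and> (\<forall>S\<in>C. diameter S \<le> \<delta>)"
    unfolding cover_number_def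
    by (rule LeastI[of _ "card C0"]) (use assms in \<open>auto simp: is_cover_def\<close>)
  then show ?thesis using that unfolding is_cover_def by blast
qed

lemma cover_number_antimono:
  assumes "is_cover \<delta>1 F C0" "\<delta>1 \<le> \<delta>2"
  shows "cover_number \<delta>2 F \<le> cover_number \<delta>1 F"
proof -
  obtain C where C: "is_cover \<delta>1 F C" "card C = cover_number \<delta>1 F"
    using cover_number_attained[OF assms(1)] .
  have "is_cover \<delta>2 F C" using is_cover_mono[OF assms(2) C(1)] .
  then show ?thesis using cover_number_le_card C(2) by metis
qed

text \<open>The supremum of an unbounded set of reals is an unspecified junk value, so all unbounded
  sets share the same diameter \<open>Sup UNIV\<close>. Scales below \<open>Sup UNIV\<close> therefore see only bounded
  sets; if \<open>Sup UNIV \<le> 0\<close>, the whole space is a single admissible covering set at every scale.\<close>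

lemma diameter_unbounded:
  fixes X :: "'a::metric_space set"
  assumes "X \<noteq> {}" "\<not> bounded X"
  shows "diameter X = Sup (UNIV :: real set)"
proof -
  have "\<not> bdd_above (case_prod dist ` (X \<times> X))"
  proof
    assume "bdd_above (case_prod dist ` (X \<times> X))"
    then obtain b where b: "\<And>x y. x \<in> X \<Longrightarrow> y \<in> X \<Longrightarrow> dist x y \<le> b"
      unfolding bdd_above_def by fastforce
    obtain x0 where "x0 \<in> X" using assms(1) by blast
    then have "bounded X" unfolding bounded_def using b by blast
    then show False using assms(2) by simp
  qed
  then have "(\<forall>x\<in>case_prod dist ` (X \<times> X). x \<le> z) \<longleftrightarrow> (\<forall>x\<in>(UNIV :: real set). x \<le> z)" for z
    unfolding bdd_above_def using not_less_iff_gr_or_eq[of "z + 1" z] by blast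
  then show ?thesis using assms(1) unfolding diameter_def Sup_real_def by simp
qed

lemma bounded_if_diameter_less_Sup_UNIV:
  fixes X :: "'a::metric_space set"
  assumes "diameter X \<le> \<delta>" "\<delta> < Sup (UNIV :: real set)"
  shows "bounded X"
proof (rule ccontr)
  assume "\<not> bounded X"
  then have "diameter X = Sup (UNIV :: real set)" by (intro diameter_unbounded) auto
  then show False using assms by simp
qed

lemma has_box_dim_zero_if_Sup_UNIV_nonpos:
  fixes F :: "'a::{real_normed_vector, perfect_space} set"
  assumes "Sup (UNIV :: real set) \<le> 0"
  shows "has_box_dim F 0"
proof -
  have ev: "eventually (\<lambda>\<delta>. ln (real (cover_number \<delta> F)) / (- ln \<delta>) = 0) (at_right (0::real))"
    using eventually_at_right_less[of "0::real"]
  proof eventually_elim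
    case (elim \<delta>)
    have "diameter (UNIV :: 'a set) = Sup (UNIV :: real set)"
      by (rule diameter_unbounded) auto
    then have "is_cover \<delta> F {UNIV}" unfolding is_cover_def using assms elim by auto
    then have "cover_number \<delta> F \<le> 1" using cover_number_le_card by fastforce
    then have "cover_number \<delta> F = 0 \<or> cover_number \<delta> F = 1" by linarith
    then show ?case by auto
  qed
  show ?thesis unfolding has_box_dim_def using tendsto_cong[OF ev] by simp
qed

lemma real_vec_add: "real_vec (x + y) = real_vec x + real_vec y"
  by (simp add: real_vec_def vec_eq_iff)

lemma real_vec_diff: "real_vec (x - y) = real_vec x - real_vec y"
  by (simp add: real_vec_def vec_eq_iff)

lemma real_vec_zero [simp]: "real_vec 0 = 0"
  by (simp add: real_vec_def vec_eq_iff)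

lemma real_vec_inject: "real_vec x = real_vec y \<longleftrightarrow> x = y"
  by (simp add: real_vec_def vec_eq_iff)

lemma real_mat_mult_real_vec: "real_mat A *v real_vec z = real_vec (A *v z)"
  by (simp add: real_vec_def real_mat_def vec_eq_iff matrix_vector_mult_def)

lemma finite_lattice_points_norm_le: "finite {z::int^'n. norm (real_vec z) \<le> r}"
proof -
  define N where "N = ceiling r"
  have "{z::int^'n. norm (real_vec z) \<le> r} \<subseteq> vec_lambda ` (PiE UNIV (\<lambda>_. {-N..N}))"
  proof
    fix z :: "int^'n" assume "z \<in> {z. norm (real_vec z) \<le> r}"
    then have comp: "\<bar>real_vec z $ i\<bar> \<le> r" for i
      using component_le_norm_cart[of "real_vec z" i] by simp
    have "\<bar>z $ i\<bar> \<le> N" for i using comp[of i] unfolding N_def by (simp add: real_vec_def le_ceiling_iff)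
    then have "z $ i \<in> {-N..N}" for i using abs_le_iff[of "z $ i" N] by auto
    then have "vec_nth z \<in> PiE UNIV (\<lambda>_. {-N..N})" by auto
    then show "z \<in> vec_lambda ` (PiE UNIV (\<lambda>_. {-N..N}))"
      by (metis image_eqI vec_nth_inverse)
  qed
  moreover have "finite (vec_lambda ` (PiE UNIV (\<lambda>_. {-N..N})) :: (int^'n) set)"
    by (intro finite_imageI finite_PiE) auto
  ultimately show ?thesis by (rule finite_subset)
qed

text \<open>The lattice points \<open>\<zeta> v\<close> of all v with \<open>\<phi> v\<close> in one covering set lie within 2M + 1 of
  each other, so each covering set accounts for at most that many v.\<close>

lemma card_le_lattice_ball_times_cover:
  fixes \<psi> :: "'a::metric_space \<Rightarrow> real^'n" and \<zeta> :: "'v \<Rightarrow> int^'n"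
  assumes cover: "is_cover r S C" and bdd: "\<forall>X\<in>C. bounded X"
    and \<psi>: "\<And>x y. dist x y \<le> r \<Longrightarrow> norm (\<psi> x - \<psi> y) \<le> 1"
    and "finite V" and inj: "inj_on \<zeta> V" and \<phi>: "\<phi> ` V \<subseteq> S"
    and close: "\<And>v. v \<in> V \<Longrightarrow> norm (\<psi> (\<phi> v) - real_vec (\<zeta> v)) \<le> M"
  shows "card V \<le> card {z::int^'n. norm (real_vec z) \<le> 2 * M + 1} * card C"
proof -
  define Ball where "Ball = {z::int^'n. norm (real_vec z) \<le> 2 * M + 1}"
  have "finite C" "S \<subseteq> \<Union>C" and diam: "\<forall>X\<in>C. diameter X \<le> r"
    using cover unfolding is_cover_def by auto
  then have "\<forall>v\<in>V. \<exists>X. X \<in> C \<and> \<phi> v \<in> X" using \<phi> by blast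
  then obtain h where h: "\<forall>v\<in>V. h v \<in> C \<and> \<phi> v \<in> h v" by metis
  have fiber: "card {v\<in>V. h v = X} \<le> card Ball" if X: "X \<in> C" for X
  proof (cases "{v\<in>V. h v = X} = {}")
    case True then show ?thesis by (simp only: card.empty)
  next
    case False
    then obtain v0 where v0: "v0 \<in> V" "h v0 = X" by blast
    have "\<zeta> ` {v\<in>V. h v = X} \<subseteq> (\<lambda>z. z + \<zeta> v0) ` Ball"
    proof
      fix y assume "y \<in> \<zeta> ` {v\<in>V. h v = X}"
      then obtain v where v: "v \<in> V" "h v = X" "y = \<zeta> v" by blast
      have "dist (\<phi> v) (\<phi> v0) \<le> diameter X"
        by (rule diameter_bounded_bound) (use bdd X h v v0 in auto)
      then have "norm (\<psi> (\<phi> v) - \<psi> (\<phi> v0)) \<le> 1" using diam X by (intro \<psi>) auto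
      moreover have "norm (real_vec (\<zeta> v) - \<psi> (\<phi> v)) \<le> M"
        using close[OF v(1)] by (simp add: norm_minus_commute)
      ultimately have "norm (real_vec (\<zeta> v) - \<psi> (\<phi> v0)) \<le> M + 1"
        by (rule norm_diff_triangle_le[rotated])
      then have "norm (real_vec (\<zeta> v) - real_vec (\<zeta> v0)) \<le> M + 1 + M"
        using close[OF v0(1)] by (rule norm_diff_triangle_le)
      then have "\<zeta> v - \<zeta> v0 \<in> Ball" unfolding Ball_def by (simp add: real_vec_diff)
      then show "y \<in> (\<lambda>z. z + \<zeta> v0) ` Ball" using v by (metis diff_add_cancel image_eqI)
    qed
    then have "card (\<zeta> ` {v\<in>V. h v = X}) \<le> card ((\<lambda>z. z + \<zeta> v0) ` Ball)"
      by (intro card_mono finite_imageI) (auto simp: Ball_def finite_lattice_points_norm_le)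
    also have "\<dots> \<le> card Ball" by (rule card_image_le) (simp add: Ball_def finite_lattice_points_norm_le)
    finally show ?thesis using card_image[OF inj_on_subset[OF inj, of "{v\<in>V. h v = X}"]] by auto
  qed
  have "card V \<le> card (\<Union>X\<in>C. {v\<in>V. h v = X})"
    using h \<open>finite V\<close> \<open>finite C\<close> by (intro card_mono) auto
  also have "\<dots> \<le> (\<Sum>X\<in>C. card {v\<in>V. h v = X})" by (rule card_UN_le[OF \<open>finite C\<close>])
  also have "\<dots> \<le> (\<Sum>X\<in>C. card Ball)" by (rule sum_mono) (rule fiber)
  finally show ?thesis unfolding Ball_def by (simp add: mult.commute)
qed

text \<open>\<open>lattice_expansion A k d = A^(k-1) d_0 + ... + d_(k-1)\<close>, the lattice point obtained by
  scaling the partial sum \<open>\<Sum>j<k. A^-(j+1) d_j\<close> with \<open>A^k\<close>.\<close>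

primrec lattice_expansion :: "int^'n^'n \<Rightarrow> nat \<Rightarrow> (nat \<Rightarrow> int^'n) \<Rightarrow> int^'n" where
  "lattice_expansion A 0 d = 0"
| "lattice_expansion A (Suc k) d = A *v lattice_expansion A k d + d k"

definition splice :: "nat \<Rightarrow> nat \<Rightarrow> (nat \<Rightarrow> 'a) \<Rightarrow> (nat \<Rightarrow> 'a) \<Rightarrow> nat \<Rightarrow> 'a" where
  "splice m k a v j = (if m \<le> j \<and> j < k then v (j - m) else a j)"

locale inverse_similarity =
  fixes A :: "int^'n^'n" and c :: real
  assumes ratio_pos: "0 < c" and ratio_less_1: "c < 1"
    and inverse_scales: "\<And>x y. norm (matrix_inv (real_mat A) *v x - matrix_inv (real_mat A) *v y) = c * norm (x - y)"
    and det_nonzero: "det (real_mat A) \<noteq> 0"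

lemma inv_similarity_imp_inverse_similarity:
  assumes "inv_similarity A"
  obtains c where "inverse_similarity A c"
  using assms unfolding inv_similarity_def inverse_similarity_def by blast

context inverse_similarity
begin

abbreviation B :: "real^'n^'n" where "B \<equiv> real_mat A"

definition f :: "real^'n \<Rightarrow> real^'n" where "f x = matrix_inv B *v x"
definition g :: "real^'n \<Rightarrow> real^'n" where "g x = B *v x"

lemma matrix_inv_B: "B ** matrix_inv B = mat 1 \<and> matrix_inv B ** B = mat 1"
proof -
  have "invertible B" using det_nonzero invertible_det_nz by blast
  then show ?thesis unfolding invertible_def matrix_inv_def by (rule someI_ex)
qed

lemma g_f [simp]: "g (f x) = x"
  unfolding f_def g_def using matrix_inv_B by (simp add: matrix_vector_mul_assoc)

lemma f_g [simp]: "f (g x) = x"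
  unfolding f_def g_def using matrix_inv_B by (simp add: matrix_vector_mul_assoc)

lemma f_diff: "f (x - y) = f x - f y"
  unfolding f_def by (simp add: matrix_vector_mult_diff_distrib)

lemma f_zero [simp]: "f 0 = 0"
  unfolding f_def by simp

lemma g_add: "g (x + y) = g x + g y"
  unfolding g_def by (simp add: matrix_vector_right_distrib)

lemma g_diff: "g (x - y) = g x - g y"
  unfolding g_def by (simp add: matrix_vector_mult_diff_distrib)

lemma norm_f: "norm (f x) = c * norm x"
  using inverse_scales[of x 0] unfolding f_def by simp

lemma norm_g: "norm (g x) = norm x / c"
  using norm_f[of "g x"] ratio_pos by (simp add: field_simps)

lemma g_real_vec: "g (real_vec z) = real_vec (A *v z)"
  unfolding g_def by (rule real_mat_mult_real_vec)

lemma bounded_linear_funpow_f: "bounded_linear (f ^^ k)"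
proof (induction k)
  case 0 then show ?case by (simp add: bounded_linear_ident[unfolded id_def])
next
  case (Suc k)
  have "bounded_linear f" unfolding f_def[abs_def] by simp
  then show ?case using bounded_linear_compose[OF _ Suc] by (simp add: o_def)
qed

lemma funpow_f_diff: "(f ^^ k) (x - y) = (f ^^ k) x - (f ^^ k) y"
  by (induction k) (auto simp: f_diff)

lemma funpow_f_zero [simp]: "(f ^^ k) 0 = 0"
  by (induction k) auto

lemma norm_funpow_f: "norm ((f ^^ k) x) = c ^ k * norm x"
  by (induction k) (auto simp: norm_f)

lemma funpow_g_add: "(g ^^ k) (x + y) = (g ^^ k) x + (g ^^ k) y"
  by (induction k) (auto simp: g_add)

lemma funpow_g_funpow_f [simp]: "(g ^^ k) ((f ^^ k) x) = x"
proof (induction k arbitrary: x)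
  case (Suc k)
  have "(g ^^ Suc k) ((f ^^ Suc k) x) = (g ^^ k) (g ((f ^^ Suc k) x))"
    by (simp only: funpow_Suc_right o_apply)
  then show ?case using Suc by simp
qed simp

lemma funpow_f_funpow_g [simp]: "(f ^^ k) ((g ^^ k) x) = x"
proof (induction k arbitrary: x)
  case (Suc k)
  have "(f ^^ Suc k) ((g ^^ Suc k) x) = (f ^^ k) (f ((g ^^ Suc k) x))"
    by (simp only: funpow_Suc_right o_apply)
  then show ?case using Suc by simp
qed simp

lemma norm_diff_funpow_g: "norm (x - y) = c ^ k * norm ((g ^^ k) x - (g ^^ k) y)"
  by (metis funpow_f_diff funpow_f_funpow_g norm_funpow_f)

lemma A_mult_inject: "A *v x = A *v y \<longleftrightarrow> x = y"
  by (metis f_g g_real_vec real_vec_inject)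

text \<open>Every residue class contains \<open>z - A \<lfloor>A\<^sup>-\<^sup>1 z\<rfloor>\<close>, a lattice point of norm at most
  n / c, and distinct elements of a complete residue system lie in distinct classes.\<close>

lemma finite_complete_residue_system:
  assumes "complete_residue_system A R"
  shows "finite R"
proof -
  define rep where "rep z = z - A *v (\<chi> i. floor (f (real_vec z) $ i))" for z
  have rep_bound: "norm (real_vec (rep z)) \<le> real CARD('n) / c" for z
  proof -
    define \<theta> where "\<theta> = f (real_vec z) - real_vec (\<chi> i. floor (f (real_vec z) $ i))"
    have "real_vec (rep z) = g \<theta>"
      unfolding rep_def \<theta>_def by (simp add: real_vec_diff g_real_vec g_diff)
    moreover have "\<bar>\<theta> $ i\<bar> \<le> 1" for i
      unfolding \<theta>_def by (simp add: real_vec_def) linarith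
    then have "norm \<theta> \<le> real CARD('n)"
      using norm_le_l1_cart[of \<theta>] sum_bounded_above[of UNIV "\<lambda>i. \<bar>\<theta> $ i\<bar>" 1] by simp
    ultimately show ?thesis using ratio_pos by (simp add: norm_g divide_right_mono)
  qed
  have inj: "inj_on rep R"
  proof (rule inj_onI)
    fix x y assume "x \<in> R" "y \<in> R" "rep x = rep y"
    then have "x - y = A *v ((\<chi> i. floor (f (real_vec x) $ i)) - (\<chi> i. floor (f (real_vec y) $ i)))"
      unfolding rep_def by (simp add: matrix_vector_mult_diff_distrib algebra_simps)
    then show "x = y" using assms \<open>x \<in> R\<close> \<open>y \<in> R\<close> unfolding complete_residue_system_def by blast
  qed
  show ?thesis
    by (rule inj_on_finite[OF inj _ finite_lattice_points_norm_le[of "real CARD('n) / c"]])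
      (use rep_bound in auto)
qed

lemma lattice_expansion_inject:
  assumes "complete_residue_system A R"
    and "\<And>j. j < k \<Longrightarrow> d j \<in> R" "\<And>j. j < k \<Longrightarrow> d' j \<in> R"
    and "lattice_expansion A k d = lattice_expansion A k d'" "j < k"
  shows "d j = d' j"
  using assms(2-)
proof (induction k arbitrary: j)
  case 0 then show ?case by simp
next
  case (Suc k)
  have eq: "A *v lattice_expansion A k d + d k = A *v lattice_expansion A k d' + d' k"
    using Suc.prems(3) by simp
  then have "d k - d' k = A *v (lattice_expansion A k d' - lattice_expansion A k d)"
    by (simp add: matrix_vector_mult_diff_distrib algebra_simps)
  then have last: "d k = d' k"
    using assms(1) Suc.prems(1,2)[of k] unfolding complete_residue_system_def by blast
  then have "lattice_expansion A k d = lattice_expansion A k d'" using eq A_mult_inject by simp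
  then show ?case using Suc.IH Suc.prems last less_Suc_eq by auto
qed

lemma pi_AE_eq_suminf: "pi_AE B e = (\<Sum>j. (f ^^ Suc j) (e j))"
  unfolding pi_AE_def f_def[abs_def, symmetric] ..

lemma norm_pi_AE_term_le:
  assumes "\<And>j. norm (e j) \<le> b"
  shows "norm ((f ^^ Suc j) (e j)) \<le> b * c ^ j"
proof -
  have "norm ((f ^^ Suc j) (e j)) = c ^ Suc j * norm (e j)" by (rule norm_funpow_f)
  also have "\<dots> \<le> c ^ j * norm (e j)"
    using ratio_pos ratio_less_1 by (intro mult_right_mono) (auto simp: power_decreasing)
  also have "\<dots> \<le> c ^ j * b" using assms[of j] ratio_pos by (intro mult_left_mono) auto
  finally show ?thesis by (simp add: mult.commute)
qed

lemma summable_geometric_ratio: "summable (\<lambda>j. b * c ^ j)"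
  using ratio_pos ratio_less_1 by (intro summable_mult summable_geometric) simp

lemma summable_pi_AE_terms:
  assumes "\<And>j. norm (e j) \<le> b"
  shows "summable (\<lambda>j. (f ^^ Suc j) (e j))"
  by (rule summable_comparison_test'[OF summable_geometric_ratio[of b], of 0])
    (use norm_pi_AE_term_le[of e b, OF assms] in auto)

lemma norm_pi_AE_le:
  assumes "\<And>j. norm (e j) \<le> b"
  shows "norm (pi_AE B e) \<le> b / (1 - c)"
proof -
  have "norm (pi_AE B e) \<le> (\<Sum>j. b * c ^ j)"
    unfolding pi_AE_eq_suminf
    by (rule norm_suminf_le[OF norm_pi_AE_term_le[OF assms] summable_geometric_ratio])
  also have "\<dots> = b / (1 - c)" using ratio_pos ratio_less_1 by (simp add: suminf_mult suminf_geometric)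
  finally show ?thesis .
qed

lemma pi_AE_split:
  assumes "\<And>j. norm (e j) \<le> b"
  shows "pi_AE B e = (\<Sum>j<k. (f ^^ Suc j) (e j)) + (f ^^ k) (pi_AE B (\<lambda>j. e (j + k)))"
proof -
  have "pi_AE B e = (\<Sum>j. (f ^^ Suc (j + k)) (e (j + k))) + (\<Sum>j<k. (f ^^ Suc j) (e j))"
    unfolding pi_AE_eq_suminf using suminf_split_initial_segment[OF summable_pi_AE_terms[OF assms]]
    by simp
  also have "(\<Sum>j. (f ^^ Suc (j + k)) (e (j + k))) = (\<Sum>j. (f ^^ k) ((f ^^ Suc j) (e (j + k))))"
  proof -
    have "f ^^ Suc (j + k) = f ^^ k \<circ> f ^^ Suc j" for j
      by (metis add.commute add_Suc_right funpow_add)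
    then show ?thesis by simp
  qed
  also have "\<dots> = (f ^^ k) (\<Sum>j. (f ^^ Suc j) (e (j + k)))"
    using bounded_linear.suminf[OF bounded_linear_funpow_f summable_pi_AE_terms[of "\<lambda>j. e (j + k)" b]]
      assms by simp
  finally show ?thesis unfolding pi_AE_eq_suminf by simp
qed

lemma pi_AE_diff:
  assumes "\<And>j. norm (e j) \<le> b" "\<And>j. norm (e' j) \<le> b'"
  shows "pi_AE B e - pi_AE B e' = pi_AE B (\<lambda>j. e j - e' j)"
  unfolding pi_AE_eq_suminf funpow_f_diff
  by (rule suminf_diff[OF summable_pi_AE_terms[OF assms(1)] summable_pi_AE_terms[OF assms(2)]])

lemma funpow_g_digit_sum:
  "(g ^^ k) (\<Sum>j<k. (f ^^ Suc j) (real_vec (d j))) = real_vec (lattice_expansion A k d)"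
proof (induction k)
  case (Suc k)
  have "(g ^^ Suc k) (\<Sum>j<Suc k. (f ^^ Suc j) (real_vec (d j)))
      = g ((g ^^ k) (\<Sum>j<k. (f ^^ Suc j) (real_vec (d j)))) + real_vec (d k)"
    by (simp only: sum.lessThan_Suc funpow_g_add funpow_g_funpow_f) (simp add: g_add)
  then show ?case using Suc by (simp add: g_real_vec real_vec_add)
qed simp

end

locale digit_system = inverse_similarity A c
  for A :: "int^'n^'n" and c :: real +
  fixes R D :: "(int^'n) set"
  assumes residue_system: "complete_residue_system A R" and digits_subset: "D \<subseteq> R"
begin

abbreviation T :: "(real^'n) set" where "T \<equiv> T_AE B (real_vec ` D)"

abbreviation point :: "(nat \<Rightarrow> int^'n) \<Rightarrow> real^'n" where
  "point s \<equiv> pi_AE B (\<lambda>j. real_vec (s j))"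

definition digit_bound :: real where "digit_bound = (\<Sum>x\<in>real_vec ` D. norm x)"

definition radius :: real where "radius = digit_bound / (1 - c)"

definition prefix_sum :: "nat \<Rightarrow> (nat \<Rightarrow> int^'n) \<Rightarrow> real^'n" where
  "prefix_sum k s = (\<Sum>j<k. (f ^^ Suc j) (real_vec (s j)))"

definition words :: "nat \<Rightarrow> (nat \<Rightarrow> int^'n) set" where
  "words k = PiE {..<k} (\<lambda>_. D)"

definition cylinder :: "nat \<Rightarrow> (nat \<Rightarrow> int^'n) \<Rightarrow> (real^'n) set" where
  "cylinder m a = point ` {s. (\<forall>j. s j \<in> D) \<and> (\<forall>j<m. s j = a j)}"

lemma finite_digits: "finite D"
  using finite_complete_residue_system[OF residue_system] digits_subset finite_subset by blast

lemma norm_digit_le: "y \<in> D \<Longrightarrow> norm (real_vec y) \<le> digit_bound"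
  unfolding digit_bound_def using finite_digits by (intro member_le_sum) auto

lemma digit_bound_nonneg: "0 \<le> digit_bound"
  unfolding digit_bound_def by (simp add: sum_nonneg)

lemma norm_digit_diff_le: "y \<in> D \<Longrightarrow> y' \<in> D \<Longrightarrow> norm (real_vec y - real_vec y') \<le> 2 * digit_bound"
  using norm_triangle_ineq4[of "real_vec y" "real_vec y'"] norm_digit_le[of y] norm_digit_le[of y']
  by linarith

lemma radius_nonneg: "0 \<le> radius"
  unfolding radius_def using digit_bound_nonneg ratio_less_1 by simp

lemma T_eq_image: "T = point ` {s. \<forall>j. s j \<in> D}"
proof
  show "point ` {s. \<forall>j. s j \<in> D} \<subseteq> T" unfolding T_AE_def by blast
  show "T \<subseteq> point ` {s. \<forall>j. s j \<in> D}"
  proof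
    fix x assume "x \<in> T"
    then obtain e where e: "x = pi_AE B e" "\<forall>j. e j \<in> real_vec ` D" unfolding T_AE_def by blast
    then have "\<forall>j. \<exists>y. y \<in> D \<and> e j = real_vec y" by blast
    then obtain s where s: "\<forall>j. s j \<in> D \<and> e j = real_vec (s j)" by metis
    then have "e = (\<lambda>j. real_vec (s j))" by auto
    then show "x \<in> point ` {s. \<forall>j. s j \<in> D}" using e(1) s by blast
  qed
qed

lemma norm_le_radius:
  assumes "x \<in> T"
  shows "norm x \<le> radius"
proof -
  obtain s where s: "\<forall>j. s j \<in> D" "x = point s" using assms unfolding T_eq_image by blast
  have "norm (point s) \<le> digit_bound / (1 - c)"
    by (rule norm_pi_AE_le) (rule norm_digit_le, use s(1) in blast)
  then show ?thesis using s(2) unfolding radius_def by simp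
qed

lemma point_split:
  assumes "\<And>j. s j \<in> D"
  shows "point s = prefix_sum k s + (f ^^ k) (point (\<lambda>j. s (j + k)))"
  unfolding prefix_sum_def by (rule pi_AE_split) (rule norm_digit_le[OF assms])

lemma funpow_g_point:
  assumes "\<And>j. s j \<in> D"
  shows "(g ^^ k) (point s) = real_vec (lattice_expansion A k s) + point (\<lambda>j. s (j + k))"
proof -
  have "(g ^^ k) (prefix_sum k s) = real_vec (lattice_expansion A k s)"
    unfolding prefix_sum_def by (rule funpow_g_digit_sum)
  moreover have "(g ^^ k) (point s) = (g ^^ k) (prefix_sum k s) + point (\<lambda>j. s (j + k))"
    by (subst point_split[OF assms, where k = k]) (simp only: funpow_g_add funpow_g_funpow_f)
  ultimately show ?thesis by simp
qed

lemma prefix_sum_restrict: "prefix_sum k (restrict s {..<k}) = prefix_sum k s"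
  unfolding prefix_sum_def by (rule sum.cong) simp_all

lemma T_subset_pieces: "T \<subseteq> (\<Union>w\<in>words k. (\<lambda>t. prefix_sum k w + (f ^^ k) t) ` T)"
proof
  fix x assume "x \<in> T"
  then obtain s where s: "\<And>j. s j \<in> D" and x: "x = point s" unfolding T_eq_image by auto
  define w where "w = restrict s {..<k}"
  define t where "t = point (\<lambda>j. s (j + k))"
  have w: "w \<in> words k" unfolding w_def words_def using s by simp
  have t: "t \<in> T" unfolding t_def T_eq_image using s by (intro image_eqI[where x = "\<lambda>j. s (j + k)"]) simp_all
  have "x = prefix_sum k s + (f ^^ k) t" unfolding x t_def by (rule point_split[OF s])
  also have "prefix_sum k s = prefix_sum k w" unfolding w_def by (rule prefix_sum_restrict[symmetric])
  finally have "x \<in> (\<lambda>t. prefix_sum k w + (f ^^ k) t) ` T" using t by (rule image_eqI)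
  with w show "x \<in> (\<Union>w\<in>words k. (\<lambda>t. prefix_sum k w + (f ^^ k) t) ` T)" by blast
qed

definition cover_scale :: real where "cover_scale = 2 * radius + 1"

lemma cover_scale_pos: "0 < cover_scale"
  unfolding cover_scale_def using radius_nonneg by simp

lemma is_cover_pieces:
  assumes "S \<subseteq> T"
  shows "is_cover (cover_scale * c ^ k) S ((\<lambda>w. (\<lambda>t. prefix_sum k w + (f ^^ k) t) ` T) ` words k)"
  unfolding is_cover_def
proof (intro conjI ballI)
  show "finite ((\<lambda>w. (\<lambda>t. prefix_sum k w + (f ^^ k) t) ` T) ` words k)"
    unfolding words_def using finite_digits by (intro finite_imageI finite_PiE) auto
  show "S \<subseteq> \<Union> ((\<lambda>w. (\<lambda>t. prefix_sum k w + (f ^^ k) t) ` T) ` words k)"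
    using assms T_subset_pieces by blast
  fix X assume "X \<in> (\<lambda>w. (\<lambda>t. prefix_sum k w + (f ^^ k) t) ` T) ` words k"
  then obtain w where X: "X = (\<lambda>t. prefix_sum k w + (f ^^ k) t) ` T" by blast
  show "diameter X \<le> cover_scale * c ^ k"
  proof (rule diameter_le)
    show "X \<noteq> {} \<or> 0 \<le> cover_scale * c ^ k" using cover_scale_pos ratio_pos by simp
    fix x y assume "x \<in> X" "y \<in> X"
    then obtain t t' where "t \<in> T" "t' \<in> T" "x = prefix_sum k w + (f ^^ k) t" "y = prefix_sum k w + (f ^^ k) t'"
      using X by blast
    then have "norm (x - y) = c ^ k * norm (t - t')" by (simp add: norm_funpow_f funpow_f_diff[symmetric])
    also have "\<dots> \<le> c ^ k * (2 * radius)"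
    proof -
      have "norm (t - t') \<le> 2 * radius"
        using norm_triangle_ineq4[of t t'] norm_le_radius[OF \<open>t \<in> T\<close>] norm_le_radius[OF \<open>t' \<in> T\<close>]
        by linarith
      then show ?thesis using ratio_pos by simp
    qed
    also have "\<dots> \<le> cover_scale * c ^ k" unfolding cover_scale_def using ratio_pos by simp
    finally show "norm (x - y) \<le> cover_scale * c ^ k" .
  qed
qed

lemma cover_number_le_card_digits_power:
  assumes "S \<subseteq> T"
  shows "cover_number (cover_scale * c ^ k) S \<le> card D ^ k"
proof -
  have "card ((\<lambda>w. (\<lambda>t. prefix_sum k w + (f ^^ k) t) ` T) ` words k) \<le> card (words k)"
    unfolding words_def using finite_digits by (intro card_image_le finite_PiE) auto
  then show ?thesis
    using cover_number_le_card[OF is_cover_pieces[OF assms, of k]] by (simp add: words_def card_PiE)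
qed

lemma exists_cover:
  assumes "S \<subseteq> T" "0 < \<delta>"
  obtains C where "is_cover \<delta> S C"
proof -
  obtain k where "c ^ k < \<delta> / cover_scale"
    using real_arch_pow_inv[of "\<delta> / cover_scale" c] assms(2) cover_scale_pos ratio_less_1 by auto
  then have "cover_scale * c ^ k \<le> \<delta>" using cover_scale_pos by (simp add: field_simps)
  then have "is_cover \<delta> S ((\<lambda>w. (\<lambda>t. prefix_sum k w + (f ^^ k) t) ` T) ` words k)"
    by (rule is_cover_mono[OF _ is_cover_pieces[OF assms(1)]])
  then show ?thesis by (rule that)
qed

lemma cylinder_subset_T: "cylinder m a \<subseteq> T"
  unfolding cylinder_def T_eq_image by (intro image_mono) blast

definition lattice_count :: nat where
  "lattice_count = card {z::int^'n. norm (real_vec z) \<le> 2 * radius + 1}"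

lemma lattice_count_pos: "0 < lattice_count"
proof -
  have "(0::int^'n) \<in> {z. norm (real_vec z) \<le> 2 * radius + 1}" using radius_nonneg by simp
  then show ?thesis unfolding lattice_count_def using finite_lattice_points_norm_le card_gt_0_iff by blast
qed

lemma splice_digit: "\<forall>j. a j \<in> D \<Longrightarrow> v \<in> words (k - m) \<Longrightarrow> splice m k a v j \<in> D"
  unfolding splice_def words_def by (auto simp: PiE_iff)

lemma point_splice_mem_cylinder:
  "\<forall>j. a j \<in> D \<Longrightarrow> v \<in> words (k - m) \<Longrightarrow> point (splice m k a v) \<in> cylinder m a"
  unfolding cylinder_def using splice_digit by (intro imageI) (simp add: splice_def)

lemma inj_on_lattice_expansion_splice:
  assumes "\<forall>j. a j \<in> D"
  shows "inj_on (\<lambda>v. lattice_expansion A k (splice m k a v)) (words (k - m))"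
proof (rule inj_onI)
  fix v v' assume v: "v \<in> words (k - m)" and v': "v' \<in> words (k - m)"
    and eq: "lattice_expansion A k (splice m k a v) = lattice_expansion A k (splice m k a v')"
  have splice_eq: "splice m k a v j = splice m k a v' j" if "j < k" for j
    by (rule lattice_expansion_inject[OF residue_system _ _ eq that])
      (use splice_digit[OF assms] v v' digits_subset in blast)+
  have "v i = v' i" if "i < k - m" for i
    using splice_eq[of "i + m"] that by (simp add: splice_def)
  then show "v = v'" using v v' unfolding words_def by (intro PiE_ext) auto
qed

text \<open>The words v of length k - m spliced into the cylinder give points whose images under
  \<open>A ^ k\<close> lie within \<open>radius\<close> of the lattice points \<open>lattice_expansion A k\<close>; these are pairwise
  distinct because D lies in a complete residue system, so a cover at scale \<open>c ^ k\<close> needs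
  \<open>card D ^ (k - m)\<close> sets up to the factor \<open>lattice_count\<close>.\<close>

lemma card_digits_power_le_cover_number:
  assumes small: "c ^ k < Sup (UNIV :: real set)" and a: "\<forall>j. a j \<in> D"
    and S: "cylinder m a \<subseteq> S" "S \<subseteq> T"
  shows "card D ^ (k - m) \<le> lattice_count * cover_number (c ^ k) S"
proof -
  have "0 < c ^ k" using ratio_pos by simp
  then obtain C0 where "is_cover (c ^ k) S C0" by (rule exists_cover[OF S(2)])
  then obtain C where C: "is_cover (c ^ k) S C" "card C = cover_number (c ^ k) S"
    by (rule cover_number_attained)
  have bounded: "\<forall>X\<in>C. bounded X"
    using C(1) small bounded_if_diameter_less_Sup_UNIV unfolding is_cover_def by blast
  have "card (words (k - m)) \<le> lattice_count * card C"
    unfolding lattice_count_def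
  proof (rule card_le_lattice_ball_times_cover[OF C(1) bounded _ _ inj_on_lattice_expansion_splice[OF a]])
    show "norm ((g ^^ k) x - (g ^^ k) y) \<le> 1" if "dist x y \<le> c ^ k" for x y
      using that norm_diff_funpow_g[of x y k] ratio_pos by (simp add: dist_norm)
    show "finite (words (k - m))"
      unfolding words_def using finite_digits by (intro finite_PiE) auto
    show "(\<lambda>v. point (splice m k a v)) ` words (k - m) \<subseteq> S"
      using point_splice_mem_cylinder[OF a] S(1) by blast
    show "norm ((g ^^ k) (point (splice m k a v)) - real_vec (lattice_expansion A k (splice m k a v)))
        \<le> radius" if "v \<in> words (k - m)" for v
    proof -
      have "point (\<lambda>j. splice m k a v (j + k)) \<in> T"
        unfolding T_eq_image using splice_digit[OF a that] by (intro imageI) simp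
      then show ?thesis using funpow_g_point[OF splice_digit[OF a that], of k] norm_le_radius by simp
    qed
  qed
  then show ?thesis using C(2) by (simp add: words_def card_PiE)
qed

lemma has_box_dim_if_cylinder_subset:
  assumes "0 < Sup (UNIV :: real set)" and a: "\<forall>j. a j \<in> D"
    and S: "cylinder m a \<subseteq> S" "S \<subseteq> T"
  shows "has_box_dim S (ln (card D) / - ln c)"
proof -
  obtain m0 where m0: "c ^ m0 < Sup (UNIV :: real set)"
    using real_arch_pow_inv[OF assms(1) ratio_less_1] by blast
  have "D \<noteq> {}" using a by blast
  then have D1: "1 \<le> real (card D)" using finite_digits by (simp add: Suc_leI card_gt_0_iff)
  show ?thesis unfolding has_box_dim_def
  proof (rule tendsto_ln_div_neg_ln_if_geometric_bounds[OF ratio_pos ratio_less_1 D1 _ cover_scale_pos,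
        of "real lattice_count * real (card D) ^ m" _ "max m m0"])
    show "0 < real lattice_count * real (card D) ^ m" using lattice_count_pos D1 by simp
    show "cover_number \<delta>2 S \<le> cover_number \<delta>1 S" if "0 < \<delta>1" "\<delta>1 \<le> \<delta>2" for \<delta>1 \<delta>2
      using exists_cover[OF S(2) that(1)] cover_number_antimono that(2) by metis
    show "real (card D) ^ k \<le> real lattice_count * real (card D) ^ m * real (cover_number (c ^ k) S)"
      if "max m m0 \<le> k" for k
    proof -
      have "c ^ k \<le> c ^ m0" using that ratio_pos ratio_less_1 by (intro power_decreasing) auto
      then have "card D ^ (k - m) \<le> lattice_count * cover_number (c ^ k) S"
        using m0 that by (intro card_digits_power_le_cover_number[OF _ a S]) auto
      then have "real (card D) ^ m * real (card D) ^ (k - m)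
          \<le> real (card D) ^ m * (real lattice_count * real (cover_number (c ^ k) S))"
        by (intro mult_left_mono) (simp_all flip: of_nat_power of_nat_mult)
      moreover have "real (card D) ^ m * real (card D) ^ (k - m) = real (card D) ^ k"
        using that by (simp flip: power_add)
      ultimately show ?thesis by (simp add: algebra_simps)
    qed
    show "real (cover_number (cover_scale * c ^ k) S) \<le> real (card D) ^ k" for k
      using cover_number_le_card_digits_power[OF S(2), of k] by (simp flip: of_nat_power)
  qed
qed

abbreviation T_diff :: "(real^'n) set" where
  "T_diff \<equiv> T_AE B (set_minus_set (real_vec ` D) (real_vec ` D))"

definition truncated_difference :: "nat \<Rightarrow> (nat \<Rightarrow> int^'n) \<Rightarrow> (nat \<Rightarrow> int^'n) \<Rightarrow> real^'n" where
  "truncated_difference m a b = pi_AE B (\<lambda>j. if j < m then real_vec (a j) - real_vec (b j) else 0)"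

lemma T_diff_memE:
  assumes "\<alpha> \<in> T_diff"
  obtains a b where "\<forall>j. a j \<in> D" "\<forall>j. b j \<in> D" "\<alpha> = pi_AE B (\<lambda>j. real_vec (a j) - real_vec (b j))"
proof -
  obtain e where e: "\<alpha> = pi_AE B e" "\<forall>j. e j \<in> set_minus_set (real_vec ` D) (real_vec ` D)"
    using assms unfolding T_AE_def by blast
  then have "\<forall>j. \<exists>p q. p \<in> D \<and> q \<in> D \<and> e j = real_vec p - real_vec q"
    unfolding set_minus_set_def by blast
  then obtain a b where ab: "\<forall>j. a j \<in> D \<and> b j \<in> D \<and> e j = real_vec (a j) - real_vec (b j)"
    by metis
  then have "e = (\<lambda>j. real_vec (a j) - real_vec (b j))" by auto
  then show ?thesis using ab e(1) by (intro that[of a b]) simp_all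
qed

lemma truncated_difference_mem:
  assumes "\<forall>j. a j \<in> D" "\<forall>j. b j \<in> D"
  shows "truncated_difference m a b \<in> T_diff"
proof -
  have "(if j < m then real_vec (a j) - real_vec (b j) else 0) \<in> set_minus_set (real_vec ` D) (real_vec ` D)"
    for j
  proof -
    have "real_vec (a j) - real_vec (b j) \<in> set_minus_set (real_vec ` D) (real_vec ` D)"
      "real_vec (a j) - real_vec (a j) \<in> set_minus_set (real_vec ` D) (real_vec ` D)"
      unfolding set_minus_set_def using assms by blast+
    then show ?thesis by simp
  qed
  then show ?thesis unfolding truncated_difference_def T_AE_def by blast
qed

lemma cylinder_subset_inter_translate:
  assumes a: "\<forall>j. a j \<in> D" and b: "\<forall>j. b j \<in> D"
  shows "cylinder m a \<subseteq> T \<inter> (\<lambda>x. x + truncated_difference m a b) ` T"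
proof
  fix x assume "x \<in> cylinder m a"
  then obtain s where s: "\<forall>j. s j \<in> D" "\<forall>j<m. s j = a j" and x: "x = point s"
    unfolding cylinder_def by auto
  define s' where "s' j = (if j < m then b j else s j)" for j
  have "x - truncated_difference m a b
      = pi_AE B (\<lambda>j. real_vec (s j) - (if j < m then real_vec (a j) - real_vec (b j) else 0))"
    unfolding x truncated_difference_def
    by (rule pi_AE_diff[of _ digit_bound _ "2 * digit_bound"])
      (use s a b norm_digit_le norm_digit_diff_le digit_bound_nonneg in auto)
  also have "\<dots> = point s'" using s(2) by (intro arg_cong[where f = "pi_AE B"]) (auto simp: s'_def)
  finally have "x = point s' + truncated_difference m a b" by (simp add: algebra_simps)
  moreover have "point s' \<in> T" unfolding T_eq_image using s(1) b by (intro imageI) (simp add: s'_def)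
  ultimately have "x \<in> (\<lambda>x. x + truncated_difference m a b) ` T" by (rule image_eqI)
  moreover have "x \<in> T" using \<open>x \<in> cylinder m a\<close> cylinder_subset_T by blast
  ultimately show "x \<in> T \<inter> (\<lambda>x. x + truncated_difference m a b) ` T" by blast
qed

lemma truncated_difference_tendsto:
  assumes a: "\<forall>j. a j \<in> D" and b: "\<forall>j. b j \<in> D"
  shows "(\<lambda>m. truncated_difference m a b) \<longlonglongrightarrow> pi_AE B (\<lambda>j. real_vec (a j) - real_vec (b j))"
proof -
  define e where "e j = real_vec (a j) - real_vec (b j)" for j
  have e_bound: "norm (e j) \<le> 2 * digit_bound" for j
    unfolding e_def using a b norm_digit_diff_le by blast
  have dist_bound: "norm (truncated_difference m a b - pi_AE B e) \<le> c ^ m * (2 * digit_bound / (1 - c))"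
    for m
  proof -
    define tail where "tail j = (if j < m then 0 else e j)" for j
    have tail_bound: "norm (tail j) \<le> 2 * digit_bound" for j
      unfolding tail_def using e_bound digit_bound_nonneg by auto
    have "pi_AE B e - truncated_difference m a b = pi_AE B tail"
      unfolding truncated_difference_def e_def[symmetric]
      by (subst pi_AE_diff[of _ "2 * digit_bound" _ "2 * digit_bound"])
        (use e_bound digit_bound_nonneg in \<open>auto simp: tail_def intro!: arg_cong[where f = "pi_AE B"]\<close>)
    also have "\<dots> = (f ^^ m) (pi_AE B (\<lambda>j. tail (j + m)))"
    proof -
      have "(\<Sum>j<m. (f ^^ Suc j) (tail j)) = 0" by (simp add: tail_def)
      then show ?thesis using pi_AE_split[where e = tail and k = m, OF tail_bound] by simp
    qed
    finally have "norm (truncated_difference m a b - pi_AE B e) = c ^ m * norm (pi_AE B (\<lambda>j. tail (j + m)))"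
      by (simp add: norm_minus_commute norm_funpow_f)
    also have "\<dots> \<le> c ^ m * (2 * digit_bound / (1 - c))"
      using norm_pi_AE_le[of "\<lambda>j. tail (j + m)", OF tail_bound] ratio_pos
      by (intro mult_left_mono) auto
    finally show ?thesis .
  qed
  have "(\<lambda>m. c ^ m) \<longlonglongrightarrow> 0" using ratio_pos ratio_less_1 by (intro LIMSEQ_power_zero) simp
  then have "(\<lambda>m. c ^ m * (2 * digit_bound / (1 - c))) \<longlonglongrightarrow> 0" by (rule tendsto_mult_left_zero)
  with always_eventually[OF allI[OF dist_bound]]
  have "(\<lambda>m. truncated_difference m a b - pi_AE B e) \<longlonglongrightarrow> 0" by (rule Lim_null_comparison)
  then show ?thesis unfolding e_def[abs_def] by (rule LIM_zero_cancel)
qed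

lemma T_diff_subset_closure_same_box_dim:
  assumes "0 < Sup (UNIV :: real set)"
  shows "T_diff \<subseteq> closure {\<alpha> \<in> T_diff. has_box_dim T (ln (card D) / - ln c) \<and>
           has_box_dim (T \<inter> (\<lambda>x. x + \<alpha>) ` T) (ln (card D) / - ln c)}"
    (is "_ \<subseteq> closure ?good")
proof
  fix \<alpha> assume "\<alpha> \<in> T_diff"
  then obtain a b where a: "\<forall>j. a j \<in> D" and b: "\<forall>j. b j \<in> D"
    and \<alpha>: "\<alpha> = pi_AE B (\<lambda>j. real_vec (a j) - real_vec (b j))"
    by (rule T_diff_memE)
  have "has_box_dim T (ln (card D) / - ln c)"
    using assms a cylinder_subset_T by (intro has_box_dim_if_cylinder_subset[of a 0]) auto
  moreover have "has_box_dim (T \<inter> (\<lambda>x. x + truncated_difference m a b) ` T) (ln (card D) / - ln c)"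
    for m using assms a b cylinder_subset_inter_translate
    by (intro has_box_dim_if_cylinder_subset[of a m]) auto
  ultimately have "truncated_difference m a b \<in> ?good" for m
    using truncated_difference_mem[OF a b] by blast
  then show "\<alpha> \<in> closure ?good"
    unfolding closure_sequential \<alpha> using truncated_difference_tendsto[OF a b]
    by (intro exI[of _ "\<lambda>m. truncated_difference m a b"] conjI allI)
qed

end

theorem mainTheorem15:
  fixes A :: "int^'n^'n" and D R :: "(int^'n) set"
  assumes "inv_similarity A"
    and "complete_residue_system A R"
    and "D \<subseteq> R"
  shows "T_AE (real_mat A) (set_minus_set (real_vec ` D) (real_vec ` D)) \<subseteq>
    closure {\<alpha> \<in> T_AE (real_mat A) (set_minus_set (real_vec ` D) (real_vec ` D)).
      \<exists>d. has_box_dim (T_AE (real_mat A) (real_vec ` D)) d \<and>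
          has_box_dim (T_AE (real_mat A) (real_vec ` D) \<inter> (\<lambda>x. x + \<alpha>) ` T_AE (real_mat A) (real_vec ` D)) d}"
    (is "_ \<subseteq> closure ?good")
proof -
  obtain c where "inverse_similarity A c" using assms(1) by (rule inv_similarity_imp_inverse_similarity)
  then interpret digit_system A c R D using assms(2,3) by (simp add: digit_system_def digit_system_axioms_def)
  show ?thesis
  proof (cases "Sup (UNIV :: real set) \<le> 0")
    case True
    have "has_box_dim F 0" for F :: "(real^'n) set" using True by (rule has_box_dim_zero_if_Sup_UNIV_nonpos)
    then have "T_diff \<subseteq> ?good" by blast
    then show ?thesis using closure_subset by (rule order_trans)
  next
    case False
    then have "T_diff \<subseteq> closure {\<alpha> \<in> T_diff. has_box_dim T (ln (card D) / - ln c) \<and>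
        has_box_dim (T \<inter> (\<lambda>x. x + \<alpha>) ` T) (ln (card D) / - ln c)}"
      by (intro T_diff_subset_closure_same_box_dim) simp
    also have "\<dots> \<subseteq> closure ?good" by (intro closure_mono) blast
    finally show ?thesis .
  qed
qed

end
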